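(* Suppose $B$ is small and let $\sigma\in\Sigma$. (a) The $B$-graded ring $S_{B,\sigma}$ is strongly graded, i.e. $(S_{B,\sigma})_{\alpha+\beta}$ is the additive subgroup generated by the products $(S_{B,\sigma})_\alpha(S_{B,\sigma})_\beta$ for all $\alpha,\beta\in B$. (b) For every $B$-graded $S_B$-module $F$ and every $\alpha\in B$ there is an isomorphism of $S_{(\sigma)}$-modules $(F_\sigma)_\alpha\cong F_{(\sigma)}$.
   Context: Let $V$ be a real vector space of finite dimension $n$, $N\subseteq V$ a lattice (free $\mathbb{Z}$-submodule of rank $n$ spanning $V$), $M=\mathrm{Hom}(N,\mathbb{Z})$. Let $\Sigma$ be an $N$-fan: a finite set of sharp (containing no line) polyhedral cones in $V$, each the conic hull of finitely many elements of $N$, closed under faces, with the intersection of two cones a face of each; $\tau\preccurlyeq\sigma$ means $\tau$ is a face of $\sigma$. Let $\Sigma_1$ be the set of rays, $\sigma_1$ the rays that are faces of $\sigma$, $\rho_N$ the primitive generator of $N\cap\rho$. Let $c\colon M\to\mathbb{Z}^{\Sigma_1}$, $m\mapsto(m(\rho_N))_\rho$, $a\colon\mathbb{Z}^{\Sigma_1}\to A$ its cokernel, $\alpha_\rho=a(\delta_\rho)$, and $\widehat\alpha_\sigma=\sum_{\rho\in\Sigma_1\setminus\sigma_1}\alpha_\rho$. Picard group: with $\sigma^\perp_M=\{u\in M\mid u(\sigma)=0\}$, let $\overline P$ be the group of families $(m_\sigma)_{\sigma\in\Sigma}\in M^\Sigma$ with $m_\sigma-m_\tau\in\tau^\perp_M$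 for all $\tau\preccurlyeq\sigma$, modulo $\prod_\sigma\sigma^\perp_M$; $\mathrm{Pic}(\Sigma)$ is $\overline P$ modulo the image of the diagonal $M\to\overline P$; it is regarded as a subgroup of $A$ via the injective map induced by $(m_\sigma)\mapsto a((m_\rho(\rho_N))_{\rho\in\Sigma_1})$. Let $B\subseteq A$ be a subgroup of finite index ("big"); $B$ is called small if $B\subseteq\mathrm{Pic}(\Sigma)$. Let $R$ be a commutative ring, $S_A=R[Z_\rho\mid\rho\in\Sigma_1]$ graded by $A$ with $\deg Z_\rho=\alpha_\rho$, and $S_B=\bigoplus_{\alpha\in B}(S_A)_\alpha$. For $\sigma\in\Sigma$ let $\widehat Z_\sigma=\prod_{\rho\in\Sigma_1\setminus\sigma_1}Z_\rho$ (of degree $\widehat\alpha_\sigma$); choose $m\geq1$ with $m\widehat\alpha_\sigma\in B$ for all $\sigma$. For a $B$-graded $S_B$-module $F$, $F_\sigma$ denotes the $B$-graded localization of $F$ at $\widehat Z_\sigma^m$ (independent of $m$), $S_{B,\sigma}=(S_B)_\sigma$, $F_{(\sigma)}=(F_\sigma)_0$ and $S_{(\sigma)}=(S_{B,\sigma})_0$. *)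

theory Defs
  imports "HOL-Analysis.Analysis" "HOL-Library.Poly_Mapping" "HOL-Library.Function_Algebras"
begin

definition is_lattice :: "'a::euclidean_space set \<Rightarrow> bool" where
  "is_lattice N \<longleftrightarrow> (\<exists>B. independent B \<and> span B = UNIV \<and>
      N = {x. \<exists>k::'a \<Rightarrow> int. x = (\<Sum>b\<in>B. of_int (k b) *\<^sub>R b)})"

text \<open>M = Hom(N, Z): additive maps N -> Z (extended by 0 outside N).\<close>
definition dual_lattice :: "'a::euclidean_space set \<Rightarrow> ('a \<Rightarrow> int) set" where
  "dual_lattice N = {u. (\<forall>x\<in>N. \<forall>y\<in>N. u (x + y) = u x + u y) \<and> (\<forall>x. x \<notin> N \<longrightarrow> u x = 0)}"

text \<open>sigma-perp in M: the u in M vanishing on sigma (u is only defined on N, so on sigma \<inter> N).\<close>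
definition perpM :: "'a::euclidean_space set \<Rightarrow> 'a set \<Rightarrow> ('a \<Rightarrow> int) set" where
  "perpM N \<sigma> = {u \<in> dual_lattice N. \<forall>x\<in>\<sigma> \<inter> N. u x = 0}"

definition cone_gen :: "'a::euclidean_space set \<Rightarrow> 'a set" where
  "cone_gen S = {x. \<exists>c. (\<forall>v\<in>S. c v \<ge> 0) \<and> x = (\<Sum>v\<in>S. c v *\<^sub>R v)}"

definition lattice_cone :: "'a::euclidean_space set \<Rightarrow> 'a set \<Rightarrow> bool" where
  "lattice_cone N \<sigma> \<longleftrightarrow> (\<exists>S. finite S \<and> S \<subseteq> N \<and> \<sigma> = cone_gen S)"

definition sharp :: "'a::euclidean_space set \<Rightarrow> bool" where
  "sharp \<sigma> \<longleftrightarrow> \<not> (\<exists>a v. v \<noteq> 0 \<and> (\<forall>t::real. a + t *\<^sub>R v \<in> \<sigma>))"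

definition is_face :: "'a::euclidean_space set \<Rightarrow> 'a set \<Rightarrow> bool" where
  "is_face \<tau> \<sigma> \<longleftrightarrow> \<tau> face_of \<sigma> \<and> \<tau> \<noteq> {}"

definition is_fan :: "'a::euclidean_space set \<Rightarrow> 'a set set \<Rightarrow> bool" where
  "is_fan N \<Sigma> \<longleftrightarrow> finite \<Sigma> \<and>
     (\<forall>\<sigma>\<in>\<Sigma>. lattice_cone N \<sigma> \<and> sharp \<sigma>) \<and>
     (\<forall>\<sigma>\<in>\<Sigma>. \<forall>\<tau>. is_face \<tau> \<sigma> \<longrightarrow> \<tau> \<in> \<Sigma>) \<and>
     (\<forall>\<sigma>\<in>\<Sigma>. \<forall>\<sigma>'\<in>\<Sigma>. is_face (\<sigma> \<inter> \<sigma>') \<sigma> \<and> is_face (\<sigma> \<inter> \<sigma>') \<sigma>')"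

definition rays :: "'a::euclidean_space set set \<Rightarrow> 'a set set" where
  "rays \<Sigma> = {\<rho> \<in> \<Sigma>. aff_dim \<rho> = 1}"

definition rays_of :: "'a::euclidean_space set set \<Rightarrow> 'a set \<Rightarrow> 'a set set" where
  "rays_of \<Sigma> \<sigma> = {\<rho> \<in> rays \<Sigma>. is_face \<rho> \<sigma>}"

definition prim :: "'a::euclidean_space set \<Rightarrow> 'a set \<Rightarrow> 'a" where
  "prim N \<rho> = (THE v. v \<in> N \<inter> \<rho> \<and> v \<noteq> 0 \<and> (\<forall>w\<in>N \<inter> \<rho>. \<exists>k::nat. w = of_nat k *\<^sub>R v))"

definition ZS :: "'a::euclidean_space set set \<Rightarrow> ('a set \<Rightarrow> int) set" where
  "ZS \<Sigma> = {x. \<forall>\<rho>. \<rho> \<notin> rays \<Sigma> \<longrightarrow> x \<rho> = 0}"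

definition cmap :: "'a::euclidean_space set \<Rightarrow> 'a set set \<Rightarrow> ('a \<Rightarrow> int) \<Rightarrow> ('a set \<Rightarrow> int)" where
  "cmap N \<Sigma> u = (\<lambda>\<rho>. if \<rho> \<in> rays \<Sigma> then u (prim N \<rho>) else 0)"

text \<open>image of c; A = ZS / imc. Elements of A are represented by elements of ZS,
  and x, y represent the same element of A iff x - y \<in> imc.\<close>
definition imc :: "'a::euclidean_space set \<Rightarrow> 'a set set \<Rightarrow> ('a set \<Rightarrow> int) set" where
  "imc N \<Sigma> = cmap N \<Sigma> ` dual_lattice N"

text \<open>Preimage in ZS of Pic(Sigma) \<subseteq> A (under the injective map (m_sigma) |-> a((m_rho(rho_N))_rho)).\<close>
definition Pic_pre :: "'a::euclidean_space set \<Rightarrow> 'a set set \<Rightarrow> ('a set \<Rightarrow> int) set" where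
  "Pic_pre N \<Sigma> = {x \<in> ZS \<Sigma>. \<exists>ms :: 'a set \<Rightarrow> ('a \<Rightarrow> int).
      (\<forall>\<sigma>\<in>\<Sigma>. ms \<sigma> \<in> dual_lattice N) \<and>
      (\<forall>\<sigma>\<in>\<Sigma>. \<forall>\<tau>. is_face \<tau> \<sigma> \<longrightarrow> ms \<sigma> - ms \<tau> \<in> perpM N \<tau>) \<and>
      x - (\<lambda>\<rho>. if \<rho> \<in> rays \<Sigma> then ms \<rho> (prim N \<rho>) else 0) \<in> imc N \<Sigma>}"

text \<open>A subgroup B of A, represented by its preimage Bp in ZS (a subgroup of ZS containing imc).
  Big = finite index.\<close>
definition big_subgroup :: "'a::euclidean_space set \<Rightarrow> 'a set set \<Rightarrow> ('a set \<Rightarrow> int) set \<Rightarrow> bool" where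
  "big_subgroup N \<Sigma> Bp \<longleftrightarrow> Bp \<subseteq> ZS \<Sigma> \<and> imc N \<Sigma> \<subseteq> Bp \<and> 0 \<in> Bp \<and>
     (\<forall>x\<in>Bp. \<forall>y\<in>Bp. x + y \<in> Bp) \<and> (\<forall>x\<in>Bp. - x \<in> Bp) \<and>
     (\<exists>F. finite F \<and> F \<subseteq> ZS \<Sigma> \<and> (\<forall>z\<in>ZS \<Sigma>. \<exists>f\<in>F. z - f \<in> Bp))"

definition small_subgroup :: "'a::euclidean_space set \<Rightarrow> 'a set set \<Rightarrow> ('a set \<Rightarrow> int) set \<Rightarrow> bool" where
  "small_subgroup N \<Sigma> Bp \<longleftrightarrow> Bp \<subseteq> Pic_pre N \<Sigma>"

definition hatvec :: "'a::euclidean_space set set \<Rightarrow> 'a set \<Rightarrow> ('a set \<Rightarrow> int)" where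
  "hatvec \<Sigma> \<sigma> = (\<lambda>\<rho>. if \<rho> \<in> rays \<Sigma> - rays_of \<Sigma> \<sigma> then 1 else 0)"

type_synonym ('a, 'r) pol = "('a set \<Rightarrow>\<^sub>0 nat) \<Rightarrow>\<^sub>0 'r"

definition SA :: "'a::euclidean_space set set \<Rightarrow> ('a, 'r::comm_ring_1) pol set" where
  "SA \<Sigma> = {p. \<forall>\<mu>\<in>Poly_Mapping.keys p. Poly_Mapping.keys \<mu> \<subseteq> rays \<Sigma>}"

definition mdeg :: "('a set \<Rightarrow>\<^sub>0 nat) \<Rightarrow> ('a set \<Rightarrow> int)" where
  "mdeg \<mu> = (\<lambda>\<rho>. int (Poly_Mapping.lookup \<mu> \<rho>))"

definition Scomp :: "'a::euclidean_space set \<Rightarrow> 'a set set \<Rightarrow> ('a set \<Rightarrow> int) \<Rightarrow> ('a, 'r::comm_ring_1) pol set" where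
  "Scomp N \<Sigma> x = {p \<in> SA \<Sigma>. \<forall>\<mu>\<in>Poly_Mapping.keys p. mdeg \<mu> - x \<in> imc N \<Sigma>}"

definition SB :: "'a::euclidean_space set set \<Rightarrow> ('a set \<Rightarrow> int) set \<Rightarrow> ('a, 'r::comm_ring_1) pol set" where
  "SB \<Sigma> Bp = {p \<in> SA \<Sigma>. \<forall>\<mu>\<in>Poly_Mapping.keys p. mdeg \<mu> \<in> Bp}"

definition Zhat :: "'a::euclidean_space set set \<Rightarrow> 'a set \<Rightarrow> ('a, 'r::comm_ring_1) pol" where
  "Zhat \<Sigma> \<sigma> = Poly_Mapping.single (\<Sum>\<rho>\<in>rays \<Sigma> - rays_of \<Sigma> \<sigma>. Poly_Mapping.single \<rho> 1) 1"

text \<open>A B-graded S_B-module: underlying abelian group the type 'm, scalar action act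
  (module axioms for scalars in S_B), components Fg x for x \<in> Bp (depending only on the class
  of x in A), internal direct sum, and (S_A)_alpha (F_beta) \<subseteq> F_(alpha+beta).\<close>
definition graded_module ::
  "'a::euclidean_space set \<Rightarrow> 'a set set \<Rightarrow> ('a set \<Rightarrow> int) set \<Rightarrow>
   (('a, 'r::comm_ring_1) pol \<Rightarrow> 'm::ab_group_add \<Rightarrow> 'm) \<Rightarrow> (('a set \<Rightarrow> int) \<Rightarrow> 'm set) \<Rightarrow> bool" where
  "graded_module N \<Sigma> Bp act Fg \<longleftrightarrow>
     (\<forall>p\<in>SB \<Sigma> Bp. \<forall>q\<in>SB \<Sigma> Bp. \<forall>v. act (p + q) v = act p v + act q v) \<and>
     (\<forall>p\<in>SB \<Sigma> Bp. \<forall>v w. act p (v + w) = act p v + act p w) \<and>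
     (\<forall>p\<in>SB \<Sigma> Bp. \<forall>q\<in>SB \<Sigma> Bp. \<forall>v. act (p * q) v = act p (act q v)) \<and>
     (\<forall>v. act 1 v = v) \<and>
     (\<forall>x\<in>Bp. 0 \<in> Fg x \<and> (\<forall>v\<in>Fg x. \<forall>w\<in>Fg x. v + w \<in> Fg x) \<and> (\<forall>v\<in>Fg x. - v \<in> Fg x)) \<and>
     (\<forall>x\<in>Bp. \<forall>y\<in>Bp. x - y \<in> imc N \<Sigma> \<longrightarrow> Fg x = Fg y) \<and>
     (\<forall>v. \<exists>X g. finite X \<and> X \<subseteq> Bp \<and> (\<forall>x\<in>X. g x \<in> Fg x) \<and> v = (\<Sum>x\<in>X. g x)) \<and>
     (\<forall>X g. finite X \<and> X \<subseteq> Bp \<and> (\<forall>x\<in>X. \<forall>y\<in>X. x - y \<in> imc N \<Sigma> \<longrightarrow> x = y) \<and>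
        (\<forall>x\<in>X. g x \<in> Fg x) \<and> (\<Sum>x\<in>X. g x) = 0 \<longrightarrow> (\<forall>x\<in>X. g x = 0)) \<and>
     (\<forall>x\<in>Bp. \<forall>y\<in>Bp. \<forall>p\<in>Scomp N \<Sigma> x. \<forall>v\<in>Fg y. act p v \<in> Fg (x + y))"

text \<open>Pairs (v,k) stand for v / f^k; C is the carrier of the module.\<close>
definition loc_rel :: "('p::monoid_mult \<Rightarrow> 'm \<Rightarrow> 'm) \<Rightarrow> 'p \<Rightarrow> 'm set \<Rightarrow> (('m \<times> nat) \<times> ('m \<times> nat)) set" where
  "loc_rel act f C = {((v, k), (w, l)). v \<in> C \<and> w \<in> C \<and> (\<exists>j. act (f ^ (j + l)) v = act (f ^ (j + k)) w)}"

definition loc_cls :: "('p::monoid_mult \<Rightarrow> 'm \<Rightarrow> 'm) \<Rightarrow> 'p \<Rightarrow> 'm set \<Rightarrow> 'm \<times> nat \<Rightarrow> ('m \<times> nat) set" where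
  "loc_cls act f C vk = loc_rel act f C `` {vk}"

definition loc_zero :: "('p::monoid_mult \<Rightarrow> 'm::zero \<Rightarrow> 'm) \<Rightarrow> 'p \<Rightarrow> 'm set \<Rightarrow> ('m \<times> nat) set" where
  "loc_zero act f C = loc_cls act f C (0, 0)"

definition loc_add :: "('p::monoid_mult \<Rightarrow> 'm::plus \<Rightarrow> 'm) \<Rightarrow> 'p \<Rightarrow> 'm set \<Rightarrow>
    ('m \<times> nat) set \<Rightarrow> ('m \<times> nat) set \<Rightarrow> ('m \<times> nat) set" where
  "loc_add act f C c d = the_elem ((\<lambda>((v, k), (w, l)). loc_cls act f C (act (f ^ l) v + act (f ^ k) w, k + l)) ` (c \<times> d))"

definition loc_neg :: "('p::monoid_mult \<Rightarrow> 'm::uminus \<Rightarrow> 'm) \<Rightarrow> 'p \<Rightarrow> 'm set \<Rightarrow>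
    ('m \<times> nat) set \<Rightarrow> ('m \<times> nat) set" where
  "loc_neg act f C c = the_elem ((\<lambda>(v, k). loc_cls act f C (- v, k)) ` c)"

text \<open>Action of the localized ring (classes of pairs (p,k) of ring elements) on the localized
  module; with act = ( * ) this is the multiplication of the localized ring.\<close>
definition loc_smul :: "('p::monoid_mult \<Rightarrow> 'm \<Rightarrow> 'm) \<Rightarrow> 'p \<Rightarrow> 'm set \<Rightarrow>
    ('p \<times> nat) set \<Rightarrow> ('m \<times> nat) set \<Rightarrow> ('m \<times> nat) set" where
  "loc_smul act f C s c = the_elem ((\<lambda>((p, k), (v, l)). loc_cls act f C (act p v, k + l)) ` (s \<times> c))"

inductive_set loc_subgroup_gen :: "('p::monoid_mult \<Rightarrow> 'm::ab_group_add \<Rightarrow> 'm) \<Rightarrow> 'p \<Rightarrow> 'm set \<Rightarrow>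
    ('m \<times> nat) set set \<Rightarrow> ('m \<times> nat) set set"
  for act f C G where
  gen_zero: "loc_zero act f C \<in> loc_subgroup_gen act f C G"
| gen_base: "g \<in> G \<Longrightarrow> g \<in> loc_subgroup_gen act f C G"
| gen_add: "c \<in> loc_subgroup_gen act f C G \<Longrightarrow> d \<in> loc_subgroup_gen act f C G \<Longrightarrow>
     loc_add act f C c d \<in> loc_subgroup_gen act f C G"
| gen_neg: "c \<in> loc_subgroup_gen act f C G \<Longrightarrow> loc_neg act f C c \<in> loc_subgroup_gen act f C G"

definition locf :: "'a::euclidean_space set set \<Rightarrow> 'a set \<Rightarrow> nat \<Rightarrow> ('a, 'r::comm_ring_1) pol" where
  "locf \<Sigma> \<sigma> m = Zhat \<Sigma> \<sigma> ^ m"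

definition SBloc_comp :: "'a::euclidean_space set \<Rightarrow> 'a set set \<Rightarrow> ('a set \<Rightarrow> int) set \<Rightarrow> 'a set \<Rightarrow> nat \<Rightarrow>
    ('a set \<Rightarrow> int) \<Rightarrow> (('a, 'r::comm_ring_1) pol \<times> nat) set set" where
  "SBloc_comp N \<Sigma> Bp \<sigma> m x = {loc_cls (*) (locf \<Sigma> \<sigma> m) (SB \<Sigma> Bp) (p, k) | p k.
      p \<in> SB \<Sigma> Bp \<and> p \<in> Scomp N \<Sigma> (x + of_nat (k * m) * hatvec \<Sigma> \<sigma>)}"

definition Floc_comp :: "'a::euclidean_space set \<Rightarrow> 'a set set \<Rightarrow> 'a set \<Rightarrow> nat \<Rightarrow>
    (('a, 'r::comm_ring_1) pol \<Rightarrow> 'm::ab_group_add \<Rightarrow> 'm) \<Rightarrow> (('a set \<Rightarrow> int) \<Rightarrow> 'm set) \<Rightarrow>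
    ('a set \<Rightarrow> int) \<Rightarrow> ('m \<times> nat) set set" where
  "Floc_comp N \<Sigma> \<sigma> m act Fg x = {loc_cls act (locf \<Sigma> \<sigma> m) UNIV (v, k) | v k.
      v \<in> Fg (x + of_nat (k * m) * hatvec \<Sigma> \<sigma>)}"

end

theory Submission
  imports Defs
begin

text \<open>Smallness of \<open>B\<close> says that every degree \<open>x \<in> B\<close> is the class of a Cartier datum
  \<open>(m\<^sub>\<tau>)\<^sub>\<tau>\<close>. Subtracting the principal divisor of \<open>m\<^sub>\<sigma>\<close> gives a representative \<open>z\<close> of \<open>x\<close>
  supported on the rays outside \<open>\<sigma>\<close>, i.e. on the variables of \<open>f = Zhat \<Sigma> \<sigma> ^ m\<close>. For \<open>K\<close>
  large, \<open>\<pm>z + K m \<alpha>\<^sub>\<sigma>\<close> are exponents of monomials \<open>a\<close>, \<open>b\<close> with \<open>a b = f ^ 2K\<close>, so \<open>a / f ^ K\<close>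
  is a unit of \<open>S\<^sub>B\<^sub>,\<^sub>\<sigma>\<close> of degree \<open>x\<close> with inverse \<open>b / f ^ K\<close>. Part (a) follows from
  \<open>p / f ^ k = (p b / f ^ (k + K)) (a / f ^ K)\<close>; in part (b) multiplication by \<open>b / f ^ K\<close> is the
  isomorphism \<open>(F\<^sub>\<sigma>)\<^sub>x \<cong> (F\<^sub>\<sigma>)\<^sub>0\<close>.\<close>

section \<open>Primitive generators of rays\<close>

lemma lattice_basis:
  assumes "is_lattice N"
  obtains B where "finite B" "\<And>c. (\<Sum>v\<in>B. c v *\<^sub>R v) = 0 \<Longrightarrow> \<forall>v\<in>B. c v = 0"
    and "N = {x. \<exists>k::'a::euclidean_space \<Rightarrow> int. x = (\<Sum>b\<in>B. of_int (k b) *\<^sub>R b)}"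
proof -
  from assms obtain B where "independent B" "N = {x. \<exists>k::'a \<Rightarrow> int. x = (\<Sum>b\<in>B. of_int (k b) *\<^sub>R b)}"
    unfolding is_lattice_def by blast
  with that show ?thesis using independent_explicit by blast
qed

lemma lattice_diff_int_scaleR:
  assumes "is_lattice N" "a \<in> N" "b \<in> N"
  shows "a - of_int i *\<^sub>R b \<in> N"
proof -
  obtain B where B: "N = {x. \<exists>k::'a \<Rightarrow> int. x = (\<Sum>b\<in>B. of_int (k b) *\<^sub>R b)}"
    using lattice_basis[OF assms(1)] by blast
  from assms(2,3) obtain ka kb where "a = (\<Sum>c\<in>B. of_int (ka c) *\<^sub>R c)" "b = (\<Sum>c\<in>B. of_int (kb c) *\<^sub>R c)"
    unfolding B by blast
  then have "a - of_int i *\<^sub>R b = (\<Sum>c\<in>B. of_int (ka c - i * kb c) *\<^sub>R c)"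
    by (simp add: sum_subtractf scaleR_diff_left scaleR_sum_right)
  then show ?thesis unfolding B mem_Collect_eq by (intro exI[of _ "\<lambda>c. ka c - i * kb c"])
qed

lemma lattice_multiples_denominator:
  assumes "is_lattice N" "s \<in> N" "s \<noteq> 0"
  obtains g :: nat where "g > 0" "\<And>t. t *\<^sub>R s \<in> N \<Longrightarrow> t * real g \<in> \<int>"
proof -
  obtain B where ind: "\<And>c. (\<Sum>v\<in>B. c v *\<^sub>R v) = 0 \<Longrightarrow> \<forall>v\<in>B. c v = 0"
    and B: "N = {x. \<exists>k::'a \<Rightarrow> int. x = (\<Sum>b\<in>B. of_int (k b) *\<^sub>R b)}"
    using lattice_basis[OF assms(1)] by blast
  from assms(2) obtain k where k: "s = (\<Sum>b\<in>B. of_int (k b) *\<^sub>R b)" unfolding B by blast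
  obtain b0 where b0: "b0 \<in> B" "k b0 \<noteq> 0"
  proof (rule ccontr)
    assume "\<not> thesis"
    with that have "\<forall>b\<in>B. k b = 0" by blast
    then have "s = 0" unfolding k by simp
    with assms(3) show False ..
  qed
  have "t * real (nat \<bar>k b0\<bar>) \<in> \<int>" if "t *\<^sub>R s \<in> N" for t
  proof -
    from that obtain k' where k': "t *\<^sub>R s = (\<Sum>b\<in>B. of_int (k' b) *\<^sub>R b)" unfolding B by blast
    have "(\<Sum>b\<in>B. (t * of_int (k b) - of_int (k' b)) *\<^sub>R b) = t *\<^sub>R s - (\<Sum>b\<in>B. of_int (k' b) *\<^sub>R b)"
      by (simp add: k scaleR_sum_right sum_subtractf scaleR_diff_left)
    then have "t * of_int (k b0) = of_int (k' b0)"
      using ind[of "\<lambda>b. t * of_int (k b) - of_int (k' b)"] k' b0(1) by simp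
    then have "t * real (nat \<bar>k b0\<bar>) = of_int (k' b0) \<or> t * real (nat \<bar>k b0\<bar>) = - of_int (k' b0)"
      by (cases "k b0 \<ge> 0") auto
    then show ?thesis by auto
  qed
  then show ?thesis using that[of "nat \<bar>k b0\<bar>"] b0(2) by simp
qed

lemma cone_gen_scaleR:
  assumes "c \<ge> 0" "a \<in> cone_gen S"
  shows "c *\<^sub>R a \<in> cone_gen S"
proof -
  obtain d where "\<forall>v\<in>S. d v \<ge> 0" "a = (\<Sum>v\<in>S. d v *\<^sub>R v)"
    using assms(2) unfolding cone_gen_def by blast
  with assms(1) show ?thesis
    unfolding cone_gen_def by (auto simp: scaleR_sum_right intro!: exI[of _ "\<lambda>v. c * d v"])
qed

lemma cone_gen_generator:
  assumes "finite S" "s \<in> S"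
  shows "s \<in> cone_gen S"
proof -
  have "(\<Sum>v\<in>S. (if v = s then 1 else 0) *\<^sub>R v) = (\<Sum>v\<in>S. if v = s then v else 0)"
    by (rule sum.cong) auto
  then show ?thesis
    unfolding cone_gen_def using assms by (auto intro!: exI[of _ "\<lambda>v. if v = s then 1 else 0"])
qed

lemma ray_nonneg_multiple:
  assumes fan: "is_fan N \<Sigma>" and \<rho>: "\<rho> \<in> rays \<Sigma>"
    and s: "s \<in> \<rho>" "s \<noteq> 0" and w: "w \<in> \<rho>"
  shows "\<exists>t\<ge>0. w = t *\<^sub>R s"
proof -
  have r: "\<rho> \<in> \<Sigma>" "aff_dim \<rho> = 1" using \<rho> unfolding rays_def by auto
  with fan obtain S where S: "\<rho> = cone_gen S" and sharp: "sharp \<rho>"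
    unfolding is_fan_def lattice_cone_def by blast
  have "0 \<in> \<rho>" using cone_gen_scaleR[of 0 s S] s(1) S by simp
  moreover obtain u where u: "\<And>x y. x \<in> \<rho> \<Longrightarrow> y \<in> \<rho> \<Longrightarrow> \<exists>c. x - y = c *\<^sub>R u"
    using r(2) collinear_aff_dim[of \<rho>] unfolding collinear_def by auto
  ultimately obtain c0 c where "s - 0 = c0 *\<^sub>R u" "w - 0 = c *\<^sub>R u"
    using u[OF s(1)] u[OF w] by blast
  with s(2) have t: "w = (c / c0) *\<^sub>R s" by auto
  show ?thesis
  proof (rule ccontr)
    assume "\<not> ?thesis"
    with t have neg: "c / c0 < 0" by (cases "c / c0 \<ge> 0") auto
    have "0 + r *\<^sub>R s \<in> \<rho>" for r
    proof (cases "r \<ge> 0")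
      case True then show ?thesis using cone_gen_scaleR s(1) S by simp
    next
      case False
      then have "0 \<le> r / (c / c0)" using neg by (intro divide_nonpos_neg) auto
      then have "(r / (c / c0)) *\<^sub>R w \<in> \<rho>" using w unfolding S by (rule cone_gen_scaleR)
      moreover have "c \<noteq> 0" "c0 \<noteq> 0" using neg by auto
      ultimately show ?thesis using t by simp
    qed
    with sharp s(2) show False unfolding sharp_def by blast
  qed
qed

lemma ray_eq_halfline:
  assumes fan: "is_fan N \<Sigma>" and \<rho>: "\<rho> \<in> rays \<Sigma>"
  obtains s where "s \<in> N" "s \<noteq> 0" "\<rho> = {t *\<^sub>R s | t. t \<ge> 0}"
proof -
  have r: "\<rho> \<in> \<Sigma>" "aff_dim \<rho> = 1" using \<rho> unfolding rays_def by auto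
  with fan obtain S where S: "finite S" "S \<subseteq> N" "\<rho> = cone_gen S"
    unfolding is_fan_def lattice_cone_def by blast
  obtain s where s: "s \<in> S" "s \<noteq> 0"
  proof (rule ccontr)
    assume "\<not> thesis"
    with that have "\<forall>v\<in>S. v = 0" by blast
    then have "\<rho> \<subseteq> {0}" unfolding S(3) cone_gen_def by (auto simp: sum.neutral)
    then have "\<rho> = {} \<or> \<rho> = {0}" by blast
    with r(2) show False by auto
  qed
  have "s \<in> \<rho>" unfolding S(3) using S(1) s(1) by (rule cone_gen_generator)
  then have "\<rho> = {t *\<^sub>R s | t. t \<ge> 0}"
    using ray_nonneg_multiple[OF fan \<rho> _ s(2)] cone_gen_scaleR[of _ s S] S(3) by auto
  then show ?thesis using that s S(2) by blast
qed

lemma prim_eqI: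
  assumes v: "v \<in> N \<inter> \<rho>" "v \<noteq> 0" and gen: "\<forall>w\<in>N \<inter> \<rho>. \<exists>k::nat. w = of_nat k *\<^sub>R v"
  shows "prim N \<rho> = v"
  unfolding prim_def
proof (rule the_equality)
  fix v' assume v': "v' \<in> N \<inter> \<rho> \<and> v' \<noteq> 0 \<and> (\<forall>w\<in>N \<inter> \<rho>. \<exists>k::nat. w = of_nat k *\<^sub>R v')"
  obtain k1 k2 :: nat where k: "v' = of_nat k1 *\<^sub>R v" "v = of_nat k2 *\<^sub>R v'"
    using gen v v' by blast
  have "of_nat (k2 * k1) *\<^sub>R v = of_nat k2 *\<^sub>R v'"
    by (simp add: k(1))
  also have "\<dots> = v" by (rule k(2)[symmetric])
  finally have "(1 - of_nat (k2 * k1)) *\<^sub>R v = 0" by (simp add: scaleR_diff_left)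
  with v(2) have "of_nat (k2 * k1) = (1::real)" by simp
  then have "k2 * k1 = 1" by (simp only: of_nat_eq_1_iff)
  with k(1) show "v' = v" by simp
qed (use assms in blast)

lemma halfline_primitive_generator:
  assumes lat: "is_lattice N" and s: "s \<in> N" "s \<noteq> 0" and L: "L = {t *\<^sub>R s | t. t \<ge> 0}"
  obtains v where "v \<in> N \<inter> L" "v \<noteq> 0" "\<forall>w\<in>N \<inter> L. \<exists>k::nat. w = of_nat k *\<^sub>R v"
proof -
  obtain g :: nat where g: "g > 0" "\<And>t. t *\<^sub>R s \<in> N \<Longrightarrow> t * real g \<in> \<int>"
    using lattice_multiples_denominator[OF lat s] by blast
  define P where "P n \<longleftrightarrow> n > 0 \<and> (real n / real g) *\<^sub>R s \<in> N" for n :: nat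
  define n0 where "n0 = (LEAST n. P n)"
  have "P g" using g s(1) by (simp add: P_def)
  then have Pn0: "P n0" and n0_min: "\<And>n. P n \<Longrightarrow> n0 \<le> n"
    unfolding n0_def by (auto intro: LeastI Least_le)
  define v where "v = (real n0 / real g) *\<^sub>R s"
  have vN: "v \<in> N \<inter> L" using Pn0 by (auto simp: P_def v_def L)
  have "\<exists>k::nat. w = of_nat k *\<^sub>R v" if w: "w \<in> N \<inter> L" for w
  proof -
    obtain t where t: "t \<ge> 0" "w = t *\<^sub>R s" using w L by blast
    then have "t * real g \<in> \<int>" using g(2) w by auto
    then obtain i where i: "t * real g = of_int i" by (auto elim: Ints_cases)
    define n where "n = nat i"
    have "(0::real) \<le> of_int i" using t(1) by (simp flip: i)
    then have "i \<ge> 0" by simp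
    then have n: "t = real n / real g" using i g(1) by (simp add: n_def field_simps)
    have "(real (n mod n0) / real g) *\<^sub>R s = w - of_int (int (n div n0)) *\<^sub>R v"
    proof -
      have "real n = real (n div n0) * real n0 + real (n mod n0)"
        by (simp flip: of_nat_mult of_nat_add)
      then have "real (n mod n0) / real g = t - real (n div n0) * (real n0 / real g)"
        using g(1) by (simp add: n field_simps)
      then show ?thesis by (simp add: t(2) v_def scaleR_diff_left)
    qed
    also have "\<dots> \<in> N" using lattice_diff_int_scaleR[OF lat] w vN by blast
    finally have "(real (n mod n0) / real g) *\<^sub>R s \<in> N" .
    moreover have "n mod n0 < n0" using Pn0 by (simp add: P_def)
    ultimately have "n mod n0 = 0" using n0_min[of "n mod n0"] by (auto simp: P_def)
    then have "n = n div n0 * n0" using div_mult_mod_eq[of n n0] by linarith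
    then have "real n = real (n div n0) * real n0" unfolding of_nat_mult[symmetric] by (rule arg_cong)
    then have "w = of_nat (n div n0) *\<^sub>R v" by (simp add: t(2) n v_def)
    then show ?thesis ..
  qed
  moreover have "v \<noteq> 0" using Pn0 g(1) s(2) by (simp add: P_def v_def)
  ultimately show ?thesis using that vN by blast
qed

lemma prim_in:
  assumes lat: "is_lattice N" and fan: "is_fan N \<Sigma>" and \<rho>: "\<rho> \<in> rays \<Sigma>"
  shows "prim N \<rho> \<in> N \<inter> \<rho>"
proof -
  obtain s where s: "s \<in> N" "s \<noteq> 0" and \<rho>_eq: "\<rho> = {t *\<^sub>R s | t. t \<ge> 0}"
    using ray_eq_halfline[OF fan \<rho>] by blast
  obtain v where "v \<in> N \<inter> \<rho>" "v \<noteq> 0" "\<forall>w\<in>N \<inter> \<rho>. \<exists>k::nat. w = of_nat k *\<^sub>R v"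
    using halfline_primitive_generator[OF lat s \<rho>_eq] by blast
  then show ?thesis using prim_eqI by metis
qed

section \<open>Homogeneous components of the Cox ring\<close>

lemma cmap_add: "cmap N \<Sigma> (u + v) = cmap N \<Sigma> u + cmap N \<Sigma> v"
  by (simp add: cmap_def fun_eq_iff)

lemma imc_zero: "0 \<in> imc N \<Sigma>"
proof -
  have "cmap N \<Sigma> 0 = 0" "(0 :: 'a \<Rightarrow> int) \<in> dual_lattice N"
    by (simp_all add: cmap_def dual_lattice_def fun_eq_iff)
  then show ?thesis unfolding imc_def by (metis image_eqI)
qed

lemma imc_add: "a \<in> imc N \<Sigma> \<Longrightarrow> b \<in> imc N \<Sigma> \<Longrightarrow> a + b \<in> imc N \<Sigma>"
  unfolding imc_def by (auto simp: cmap_add[symmetric] dual_lattice_def intro!: imageI)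

lemma imc_uminus:
  assumes "a \<in> imc N \<Sigma>" shows "- a \<in> imc N \<Sigma>"
proof -
  obtain u where u: "u \<in> dual_lattice N" "a = cmap N \<Sigma> u" using assms unfolding imc_def by blast
  then have "- a = cmap N \<Sigma> (- u)" "- u \<in> dual_lattice N"
    by (simp_all add: cmap_def fun_eq_iff dual_lattice_def)
  then show ?thesis unfolding imc_def by blast
qed

lemma mdeg_add: "mdeg (\<mu> + \<nu>) = mdeg \<mu> + mdeg \<nu>"
  by (simp add: mdeg_def fun_eq_iff lookup_add)

context
  fixes N :: "'a::euclidean_space set" and \<Sigma> and Bp
  assumes big: "big_subgroup N \<Sigma> Bp"
begin

lemma big_subgroup_add: "a \<in> Bp \<Longrightarrow> b \<in> Bp \<Longrightarrow> a + b \<in> Bp"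
  using big by (simp add: big_subgroup_def)

lemma big_subgroup_uminus: "a \<in> Bp \<Longrightarrow> - a \<in> Bp"
  using big by (simp add: big_subgroup_def)

lemma big_subgroup_zero: "0 \<in> Bp"
  using big by (simp add: big_subgroup_def)

lemma imc_subset_big_subgroup: "imc N \<Sigma> \<subseteq> Bp"
  using big by (simp add: big_subgroup_def)

lemma big_subgroup_of_nat_mult: "a \<in> Bp \<Longrightarrow> of_nat n * a \<in> Bp"
proof (induction n)
  case 0 then show ?case using big_subgroup_zero by (simp add: zero_fun_def)
next
  case (Suc n)
  then have "a + of_nat n * a \<in> Bp" using big_subgroup_add by blast
  then show ?case by (metis of_nat_Suc distrib_right mult_1 add.commute)
qed

lemma SB_add: "p \<in> SB \<Sigma> Bp \<Longrightarrow> q \<in> SB \<Sigma> Bp \<Longrightarrow> p + q \<in> SB \<Sigma> Bp"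
  by (auto simp: SB_def SA_def dest!: subsetD[OF keys_add[of p q]])

lemma SB_uminus: "p \<in> SB \<Sigma> Bp \<Longrightarrow> - p \<in> SB \<Sigma> Bp"
  by (simp add: SB_def SA_def)

lemma SB_zero: "0 \<in> SB \<Sigma> Bp"
  by (simp add: SB_def SA_def)

lemma SB_one: "1 \<in> SB \<Sigma> Bp"
  using big_subgroup_zero by (simp add: SB_def SA_def mdeg_def zero_fun_def)

lemma SB_mult:
  assumes "p \<in> SB \<Sigma> Bp" "q \<in> SB \<Sigma> Bp"
  shows "p * q \<in> SB \<Sigma> Bp"
  unfolding SB_def SA_def
proof (intro CollectI ballI conjI)
  fix \<mu> assume "\<mu> \<in> Poly_Mapping.keys (p * q)"
  then obtain a b where ab: "\<mu> = a + b" "a \<in> Poly_Mapping.keys p" "b \<in> Poly_Mapping.keys q"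
    using keys_mult[of p q] by blast
  have "Poly_Mapping.keys a \<subseteq> rays \<Sigma>" "Poly_Mapping.keys b \<subseteq> rays \<Sigma>"
    using assms ab by (auto simp: SB_def SA_def)
  then show "Poly_Mapping.keys \<mu> \<subseteq> rays \<Sigma>"
    using keys_add[of a b] ab(1) by blast
  show "mdeg \<mu> \<in> Bp"
    using assms ab big_subgroup_add by (auto simp: SB_def mdeg_add)
qed

end

lemma Scomp_add: "p \<in> Scomp N \<Sigma> a \<Longrightarrow> q \<in> Scomp N \<Sigma> a \<Longrightarrow> p + q \<in> Scomp N \<Sigma> a"
  by (auto simp: Scomp_def SA_def dest!: subsetD[OF keys_add[of p q]])

lemma Scomp_uminus: "p \<in> Scomp N \<Sigma> a \<Longrightarrow> - p \<in> Scomp N \<Sigma> a"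
  by (simp add: Scomp_def SA_def)

lemma Scomp_zero: "0 \<in> Scomp N \<Sigma> a"
  by (simp add: Scomp_def SA_def)

lemma Scomp_cong:
  assumes "x - y \<in> imc N \<Sigma>"
  shows "Scomp N \<Sigma> x = Scomp N \<Sigma> y"
proof -
  have "mdeg \<mu> - x \<in> imc N \<Sigma> \<longleftrightarrow> mdeg \<mu> - y \<in> imc N \<Sigma>" for \<mu> :: "'a set \<Rightarrow>\<^sub>0 nat"
  proof
    assume "mdeg \<mu> - x \<in> imc N \<Sigma>"
    from imc_add[OF this assms] show "mdeg \<mu> - y \<in> imc N \<Sigma>" by simp
  next
    assume "mdeg \<mu> - y \<in> imc N \<Sigma>"
    from imc_add[OF this imc_uminus[OF assms]] show "mdeg \<mu> - x \<in> imc N \<Sigma>" by simp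
  qed
  then show ?thesis by (simp add: Scomp_def)
qed

lemma Scomp_mult:
  assumes "p \<in> Scomp N \<Sigma> a" "q \<in> Scomp N \<Sigma> b"
  shows "p * q \<in> Scomp N \<Sigma> (a + b)"
  unfolding Scomp_def SA_def
proof (intro CollectI ballI conjI)
  fix \<mu> assume "\<mu> \<in> Poly_Mapping.keys (p * q)"
  then obtain c d where cd: "\<mu> = c + d" "c \<in> Poly_Mapping.keys p" "d \<in> Poly_Mapping.keys q"
    using keys_mult[of p q] by blast
  have "Poly_Mapping.keys c \<subseteq> rays \<Sigma>" "Poly_Mapping.keys d \<subseteq> rays \<Sigma>"
    using assms cd by (auto simp: Scomp_def SA_def)
  then show "Poly_Mapping.keys \<mu> \<subseteq> rays \<Sigma>"
    using keys_add[of c d] cd(1) by blast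
  have deg: "mdeg \<mu> - (a + b) = (mdeg c - a) + (mdeg d - b)"
    by (simp add: cd(1) mdeg_add)
  have "mdeg c - a \<in> imc N \<Sigma>" "mdeg d - b \<in> imc N \<Sigma>"
    using assms cd by (auto simp: Scomp_def)
  then show "mdeg \<mu> - (a + b) \<in> imc N \<Sigma>" unfolding deg by (rule imc_add)
qed

section \<open>Localization at the powers of one element\<close>

locale localized_module =
  fixes act :: "'p::comm_monoid_mult \<Rightarrow> 'm::ab_group_add \<Rightarrow> 'm" and f :: 'p
    and C :: "'m set" and P :: "'p set"
  assumes P_mult: "p \<in> P \<Longrightarrow> q \<in> P \<Longrightarrow> p * q \<in> P"
    and P_one: "1 \<in> P"
    and f_in_P: "f \<in> P"
    and act_closed: "p \<in> P \<Longrightarrow> v \<in> C \<Longrightarrow> act p v \<in> C"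
    and act_mult: "p \<in> P \<Longrightarrow> q \<in> P \<Longrightarrow> v \<in> C \<Longrightarrow> act (p * q) v = act p (act q v)"
    and act_add: "p \<in> P \<Longrightarrow> v \<in> C \<Longrightarrow> w \<in> C \<Longrightarrow> act p (v + w) = act p v + act p w"
    and C_add: "v \<in> C \<Longrightarrow> w \<in> C \<Longrightarrow> v + w \<in> C"
    and C_uminus: "v \<in> C \<Longrightarrow> - v \<in> C"
    and C_zero: "0 \<in> C"
begin

abbreviation "cls \<equiv> loc_cls act f C"
abbreviation "clsP \<equiv> loc_cls (*) f P"

lemma act_uminus:
  assumes "p \<in> P" "v \<in> C"
  shows "act p (- v) = - act p v"
proof -
  have "act p 0 = 0" using act_add[OF assms(1) C_zero C_zero] by simp
  then have "act p (- v) + act p v = 0" using act_add[OF assms(1) C_uminus[OF assms(2)] assms(2)] by simp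
  then show ?thesis by (simp add: eq_neg_iff_add_eq_0)
qed

lemma f_pow_in_P: "f ^ n \<in> P"
  by (induction n) (simp_all add: P_one P_mult f_in_P)

lemma act_f_pow: "v \<in> C \<Longrightarrow> act (f ^ a) (act (f ^ b) v) = act (f ^ (a + b)) v"
  by (simp add: act_mult[symmetric] f_pow_in_P power_add)

lemma mem_loc_cls:
  "(w, l) \<in> cls (v, k) \<longleftrightarrow> v \<in> C \<and> w \<in> C \<and> (\<exists>j. act (f ^ (j + l)) v = act (f ^ (j + k)) w)"
  by (simp add: loc_cls_def loc_rel_def)

lemma loc_rel_equiv: "equiv (C \<times> UNIV) (loc_rel act f C)"
proof (rule equivI)
  show "refl_on (C \<times> UNIV) (loc_rel act f C)"
    by (auto simp: refl_on_def loc_rel_def)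
  show "sym (loc_rel act f C)"
    by (clarsimp simp: sym_def loc_rel_def) metis
  show "loc_rel act f C \<subseteq> (C \<times> UNIV) \<times> (C \<times> UNIV)"
    by (auto simp: loc_rel_def)
  show "trans (loc_rel act f C)"
  proof (rule transI, clarify)
    fix v k w l u n
    assume "((v, k), (w, l)) \<in> loc_rel act f C" "((w, l), (u, n)) \<in> loc_rel act f C"
    then obtain i j where C: "v \<in> C" "w \<in> C" "u \<in> C"
      and i: "act (f ^ (i + l)) v = act (f ^ (i + k)) w"
      and j: "act (f ^ (j + n)) w = act (f ^ (j + l)) u"
      by (auto simp: loc_rel_def)
    have "act (f ^ ((i + j + l) + n)) v = act (f ^ (j + n)) (act (f ^ (i + l)) v)"
      using C by (simp add: act_f_pow ac_simps)
    also have "\<dots> = act (f ^ (i + k)) (act (f ^ (j + n)) w)"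
      using C by (simp add: i act_f_pow ac_simps)
    also have "\<dots> = act (f ^ ((i + j + l) + k)) u"
      using C by (simp add: j act_f_pow ac_simps)
    finally show "((v, k), (u, n)) \<in> loc_rel act f C"
      using C by (auto simp: loc_rel_def)
  qed
qed

lemma loc_cls_eqI:
  assumes "v \<in> C" "w \<in> C" "act (f ^ (j + l)) v = act (f ^ (j + k)) w"
  shows "cls (v, k) = cls (w, l)"
  unfolding loc_cls_def using assms
  by (intro equiv_class_eq[OF loc_rel_equiv]) (auto simp: loc_rel_def)

lemma loc_cls_self: "v \<in> C \<Longrightarrow> (v, k) \<in> cls (v, k)"
  by (auto simp: mem_loc_cls)

lemma loc_add_cls:
  assumes "v \<in> C" "w \<in> C"
  shows "loc_add act f C (cls (v, k)) (cls (w, l)) = cls (act (f ^ l) v + act (f ^ k) w, k + l)"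
  unfolding loc_add_def
proof (rule the_elem_image_unique)
  show "cls (v, k) \<times> cls (w, l) \<noteq> {}" using assms loc_cls_self by blast
next
  fix x assume "x \<in> cls (v, k) \<times> cls (w, l)"
  then obtain v' k' w' l' where x: "x = ((v', k'), (w', l'))"
    and "(v', k') \<in> cls (v, k)" "(w', l') \<in> cls (w, l)"
    by (metis mem_Times_iff prod.collapse)
  then obtain i i' where C: "v' \<in> C" "w' \<in> C"
    and i: "act (f ^ (i + k')) v = act (f ^ (i + k)) v'"
    and i': "act (f ^ (i' + l')) w = act (f ^ (i' + l)) w'"
    by (auto simp: mem_loc_cls)
  have "act (f ^ ((i + i') + (k + l))) (act (f ^ l') v') = act (f ^ (i' + l + l')) (act (f ^ (i + k)) v')"
    using C by (simp add: act_f_pow ac_simps)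
  also have "\<dots> = act (f ^ ((i + i') + (k' + l'))) (act (f ^ l) v)"
    using assms by (simp add: i[symmetric] act_f_pow ac_simps)
  finally have e1: "act (f ^ ((i + i') + (k + l))) (act (f ^ l') v') =
      act (f ^ ((i + i') + (k' + l'))) (act (f ^ l) v)" .
  have "act (f ^ ((i + i') + (k + l))) (act (f ^ k') w') = act (f ^ (i + k + k')) (act (f ^ (i' + l)) w')"
    using C by (simp add: act_f_pow ac_simps)
  also have "\<dots> = act (f ^ ((i + i') + (k' + l'))) (act (f ^ k) w)"
    using assms by (simp add: i'[symmetric] act_f_pow ac_simps)
  finally have e2: "act (f ^ ((i + i') + (k + l))) (act (f ^ k') w') =
      act (f ^ ((i + i') + (k' + l'))) (act (f ^ k) w)" .
  have "cls (act (f ^ l') v' + act (f ^ k') w', k' + l') = cls (act (f ^ l) v + act (f ^ k) w, k + l)"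
    by (rule loc_cls_eqI[where j = "i + i'"])
       (simp_all add: act_add act_closed f_pow_in_P C_add C assms e1 e2)
  then show "(\<lambda>((v, k), (w, l)). cls (act (f ^ l) v + act (f ^ k) w, k + l)) x =
      cls (act (f ^ l) v + act (f ^ k) w, k + l)"
    by (simp add: x)
qed

lemma loc_neg_cls:
  assumes "v \<in> C"
  shows "loc_neg act f C (cls (v, k)) = cls (- v, k)"
  unfolding loc_neg_def
proof (rule the_elem_image_unique)
  show "cls (v, k) \<noteq> {}" using assms loc_cls_self by blast
next
  fix x assume "x \<in> cls (v, k)"
  then obtain v' k' where x: "x = (v', k')" and "(v', k') \<in> cls (v, k)"
    by (metis prod.collapse)
  then obtain i where "v' \<in> C" "act (f ^ (i + k')) v = act (f ^ (i + k)) v'"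
    by (auto simp: mem_loc_cls)
  then have "cls (- v', k') = cls (- v, k)"
    by (intro loc_cls_eqI[where j = i]) (simp_all add: act_uminus f_pow_in_P C_uminus assms)
  then show "(\<lambda>(v, k). cls (- v, k)) x = cls (- v, k)" by (simp add: x)
qed

lemma loc_smul_cls:
  assumes "p \<in> P" "v \<in> C"
  shows "loc_smul act f C (clsP (p, k)) (cls (v, l)) = cls (act p v, k + l)"
  unfolding loc_smul_def
proof (rule the_elem_image_unique)
  show "clsP (p, k) \<times> cls (v, l) \<noteq> {}"
    using assms loc_cls_self by (auto simp: loc_cls_def loc_rel_def)
next
  fix x assume "x \<in> clsP (p, k) \<times> cls (v, l)"
  then obtain p' k' v' l' where x: "x = ((p', k'), (v', l'))"
    and "(p', k') \<in> clsP (p, k)" "(v', l') \<in> cls (v, l)"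
    by (metis mem_Times_iff prod.collapse)
  then obtain j i where C: "p' \<in> P" "v' \<in> C"
    and j: "f ^ (j + k') * p = f ^ (j + k) * p'"
    and i: "act (f ^ (i + l')) v = act (f ^ (i + l)) v'"
    by (auto simp: mem_loc_cls loc_cls_def loc_rel_def)
  have "act (f ^ ((i + j) + (k + l))) (act p' v') = act (f ^ (j + k) * p') (act (f ^ (i + l)) v')"
    using C by (simp add: act_mult[symmetric] f_pow_in_P P_mult power_add ac_simps)
  also have "\<dots> = act (f ^ (j + k) * p') (act (f ^ (i + l')) v)"
    by (simp add: i)
  also have "\<dots> = act (f ^ (j + k') * p * f ^ (i + l')) v"
    using C assms by (simp add: act_mult[symmetric] f_pow_in_P P_mult j)
  also have "\<dots> = act (f ^ ((i + j) + (k' + l'))) (act p v)"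
    using assms by (simp add: act_mult[symmetric] f_pow_in_P P_mult power_add ac_simps)
  finally have "cls (act p' v', k' + l') = cls (act p v, k + l)"
    by (intro loc_cls_eqI[where j = "i + j"]) (simp_all add: act_closed C assms)
  then show "(\<lambda>((p, k), (v, l)). cls (act p v, k + l)) x = cls (act p v, k + l)"
    by (simp add: x)
qed

lemma loc_cls_cancel:
  assumes "p \<in> P" "q \<in> P" "v \<in> C" "p * q = f ^ (k + l)"
  shows "cls (act p (act q v), k + (l + n)) = cls (v, n)"
proof (rule loc_cls_eqI[where j = 0])
  have "act (f ^ n) (act p (act q v)) = act (f ^ n * (p * q)) v"
    using assms(1-3) by (simp add: act_mult f_pow_in_P P_mult)
  then show "act (f ^ (0 + n)) (act p (act q v)) = act (f ^ (0 + (k + (l + n)))) v"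
    by (simp add: assms(4) power_add ac_simps)
qed (simp_all add: assms act_closed)

lemma loc_smul_loc_add:
  assumes "p \<in> P" "v \<in> C" "w \<in> C"
  shows "loc_smul act f C (clsP (p, k)) (loc_add act f C (cls (v, l)) (cls (w, n))) =
    loc_add act f C (loc_smul act f C (clsP (p, k)) (cls (v, l))) (loc_smul act f C (clsP (p, k)) (cls (w, n)))"
proof -
  have "cls (act p (act (f ^ n) v + act (f ^ l) w), k + (l + n)) =
      cls (act (f ^ (k + n)) (act p v) + act (f ^ (k + l)) (act p w), k + l + (k + n))"
    by (rule loc_cls_eqI[where j = 0])
      (simp_all add: assms act_add act_closed C_add f_pow_in_P P_mult act_mult[symmetric]
        power_add ac_simps)
  then show ?thesis
    by (simp add: assms loc_add_cls loc_smul_cls act_closed C_add f_pow_in_P)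
qed

lemma loc_smul_commute:
  assumes "p \<in> P" "q \<in> P" "v \<in> C"
  shows "loc_smul act f C (clsP (p, k)) (loc_smul act f C (clsP (q, l)) (cls (v, n))) =
    loc_smul act f C (clsP (q, l)) (loc_smul act f C (clsP (p, k)) (cls (v, n)))"
  using assms by (simp add: loc_smul_cls act_closed act_mult[symmetric] mult.commute add.left_commute)

end

section \<open>Units of \<open>S\<^sub>B\<^sub>,\<^sub>\<sigma>\<close> in every degree\<close>

lemma rays_finite: "is_fan N \<Sigma> \<Longrightarrow> finite (rays \<Sigma>)"
  unfolding is_fan_def rays_def by auto

lemma mdeg_inject: "mdeg \<mu> = mdeg \<nu> \<Longrightarrow> \<mu> = \<nu>"
  by (rule poly_mapping_eqI) (simp add: mdeg_def fun_eq_iff)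

lemma ex_monomial_with_mdeg:
  assumes "finite R" "\<And>\<rho>. d \<rho> \<ge> 0" "\<And>\<rho>. \<rho> \<notin> R \<Longrightarrow> d \<rho> = 0"
  obtains \<mu> where "Poly_Mapping.keys \<mu> \<subseteq> R" "mdeg \<mu> = d"
proof
  have "finite {\<rho>. nat (d \<rho>) \<noteq> 0}"
  proof (rule finite_subset[OF _ assms(1)], rule subsetI)
    fix \<rho> assume "\<rho> \<in> {\<rho>. nat (d \<rho>) \<noteq> 0}"
    then show "\<rho> \<in> R" using assms(3)[of \<rho>] by (cases "\<rho> \<in> R") auto
  qed
  then have lookup: "Poly_Mapping.lookup (Abs_poly_mapping (\<lambda>\<rho>. nat (d \<rho>))) = (\<lambda>\<rho>. nat (d \<rho>))"
    by simp
  show "Poly_Mapping.keys (Abs_poly_mapping (\<lambda>\<rho>. nat (d \<rho>))) \<subseteq> R"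
  proof
    fix \<rho> assume "\<rho> \<in> Poly_Mapping.keys (Abs_poly_mapping (\<lambda>\<rho>. nat (d \<rho>)))"
    then show "\<rho> \<in> R" using assms(3)[of \<rho>] by (cases "\<rho> \<in> R") (auto simp: in_keys_iff lookup)
  qed
  show "mdeg (Abs_poly_mapping (\<lambda>\<rho>. nat (d \<rho>))) = d"
    using assms(2) by (simp add: mdeg_def lookup)
qed

lemma single_in_SB:
  "Poly_Mapping.keys \<mu> \<subseteq> rays \<Sigma> \<Longrightarrow> mdeg \<mu> \<in> Bp \<Longrightarrow> Poly_Mapping.single \<mu> c \<in> SB \<Sigma> Bp"
  by (simp add: SB_def SA_def)

lemma single_in_Scomp:
  "Poly_Mapping.keys \<mu> \<subseteq> rays \<Sigma> \<Longrightarrow> mdeg \<mu> - x \<in> imc N \<Sigma> \<Longrightarrow> Poly_Mapping.single \<mu> c \<in> Scomp N \<Sigma> x"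
  by (simp add: Scomp_def SA_def)

lemma locf_power:
  assumes "finite (rays \<Sigma>)"
  obtains \<nu> where "(locf \<Sigma> \<sigma> m :: ('a::euclidean_space, 'r::comm_ring_1) pol) ^ n = Poly_Mapping.single \<nu> 1"
    and "Poly_Mapping.keys \<nu> \<subseteq> rays \<Sigma>" and "mdeg \<nu> = of_nat (n * m) * hatvec \<Sigma> \<sigma>"
proof -
  define R where "R = rays \<Sigma> - rays_of \<Sigma> \<sigma>"
  define \<mu> where "\<mu> = (\<Sum>\<rho>\<in>R. Poly_Mapping.single \<rho> (1::nat))"
  have lookup_\<mu>: "Poly_Mapping.lookup \<mu> \<rho> = (if \<rho> \<in> R then 1 else 0)" for \<rho>
    using assms by (simp add: \<mu>_def R_def lookup_sum lookup_single when_def)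
  have "(Poly_Mapping.single \<mu> 1 :: ('a, 'r) pol) ^ k = Poly_Mapping.single (\<Sum>_<k. \<mu>) 1" for k
    by (induction k) (simp_all add: mult_single add.commute del: sum_constant)
  moreover have "(locf \<Sigma> \<sigma> m :: ('a, 'r) pol) ^ n = Poly_Mapping.single \<mu> 1 ^ (n * m)"
    unfolding locf_def Zhat_def R_def \<mu>_def by (simp add: power_mult[symmetric] mult.commute)
  ultimately have "(locf \<Sigma> \<sigma> m :: ('a, 'r) pol) ^ n = Poly_Mapping.single (\<Sum>_<n * m. \<mu>) 1"
    by simp
  moreover have lookup: "Poly_Mapping.lookup (\<Sum>_<n * m. \<mu>) \<rho> = (if \<rho> \<in> R then n * m else 0)" for \<rho>
    by (simp only: lookup_sum lookup_\<mu>) simp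
  moreover have "Poly_Mapping.keys (\<Sum>_<n * m. \<mu>) \<subseteq> rays \<Sigma>"
  proof
    fix \<rho> assume "\<rho> \<in> Poly_Mapping.keys (\<Sum>_<n * m. \<mu>)"
    then have "Poly_Mapping.lookup (\<Sum>_<n * m. \<mu>) \<rho> \<noteq> 0" by (simp only: in_keys_iff not_False_eq_True)
    then show "\<rho> \<in> rays \<Sigma>" unfolding lookup by (simp add: R_def split: if_splits)
  qed
  moreover have "mdeg (\<Sum>_<n * m. \<mu>) = of_nat (n * m) * hatvec \<Sigma> \<sigma>"
    by (simp only: mdeg_def lookup) (simp add: fun_eq_iff hatvec_def R_def)
  ultimately show ?thesis using that by blast
qed

lemma Pic_pre_trivial_on_chart:
  assumes lat: "is_lattice N" and fan: "is_fan N \<Sigma>" and x: "x \<in> Pic_pre N \<Sigma>" and \<sigma>: "\<sigma> \<in> \<Sigma>"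
  obtains z where "x - z \<in> imc N \<Sigma>" and "\<And>\<rho>. \<rho> \<notin> rays \<Sigma> - rays_of \<Sigma> \<sigma> \<Longrightarrow> z \<rho> = 0"
proof -
  obtain ms where ms_dual: "\<forall>\<sigma>\<in>\<Sigma>. ms \<sigma> \<in> dual_lattice N"
    and ms_faces: "\<forall>\<sigma>\<in>\<Sigma>. \<forall>\<tau>. is_face \<tau> \<sigma> \<longrightarrow> ms \<sigma> - ms \<tau> \<in> perpM N \<tau>"
    and x_ms: "x - (\<lambda>\<rho>. if \<rho> \<in> rays \<Sigma> then ms \<rho> (prim N \<rho>) else 0) \<in> imc N \<Sigma>"
    using x unfolding Pic_pre_def by blast
  \<comment> \<open>\<open>z\<close> vanishes on the rays of \<open>\<sigma>\<close> because there \<open>m\<^sub>\<rho>\<close> and \<open>m\<^sub>\<sigma>\<close> agree on \<open>\<rho>\<^sub>N\<close>.\<close>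
  define z where "z = (\<lambda>\<rho>. if \<rho> \<in> rays \<Sigma> then ms \<rho> (prim N \<rho>) else 0) - cmap N \<Sigma> (ms \<sigma>)"
  have "cmap N \<Sigma> (ms \<sigma>) \<in> imc N \<Sigma>" using ms_dual \<sigma> by (simp add: imc_def)
  moreover have "x - z = (x - (\<lambda>\<rho>. if \<rho> \<in> rays \<Sigma> then ms \<rho> (prim N \<rho>) else 0)) + cmap N \<Sigma> (ms \<sigma>)"
    by (simp add: z_def)
  ultimately have "x - z \<in> imc N \<Sigma>" using imc_add[OF x_ms] by metis
  moreover have "z \<rho> = 0" if "\<rho> \<notin> rays \<Sigma> - rays_of \<Sigma> \<sigma>" for \<rho>
  proof (cases "\<rho> \<in> rays \<Sigma>")
    case True
    with that have "is_face \<rho> \<sigma>" by (simp add: rays_of_def)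
    then have "ms \<sigma> - ms \<rho> \<in> perpM N \<rho>" using ms_faces \<sigma> by blast
    moreover have "prim N \<rho> \<in> N \<inter> \<rho>" using prim_in[OF lat fan True] .
    ultimately have "ms \<sigma> (prim N \<rho>) = ms \<rho> (prim N \<rho>)" by (simp add: perpM_def)
    then show ?thesis using True by (simp add: z_def cmap_def)
  qed (simp add: z_def cmap_def)
  ultimately show ?thesis using that by blast
qed

locale small_chart =
  fixes N :: "'a::euclidean_space set" and \<Sigma> :: "'a set set" and Bp :: "('a set \<Rightarrow> int) set"
    and \<sigma> :: "'a set" and m :: nat
  assumes lattice: "is_lattice N"
    and fan: "is_fan N \<Sigma>"
    and big: "big_subgroup N \<Sigma> Bp"
    and small: "small_subgroup N \<Sigma> Bp"
    and \<sigma>: "\<sigma> \<in> \<Sigma>"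
    and m_pos: "m \<ge> 1"
    and hatvec_multiple: "\<forall>\<tau>\<in>\<Sigma>. (\<lambda>\<rho>. int m * hatvec \<Sigma> \<tau> \<rho>) \<in> Bp"
begin

abbreviation "H \<equiv> hatvec \<Sigma> \<sigma>"
abbreviation "f \<equiv> locf \<Sigma> \<sigma> m"

lemma shift_add:
  "(x + of_nat (k * m) * H) + (y + of_nat (l * m) * H) = (x + y) + of_nat ((k + l) * m) * H"
  by (simp add: algebra_simps)

lemma f_power_shift:
  "of_nat (l * m) * H + (x + of_nat (k * m) * H) = x + of_nat ((l + k) * m) * H"
  by (simp add: algebra_simps)

lemma shift_in_B:
  assumes "x \<in> Bp"
  shows "x + of_nat (k * m) * H \<in> Bp"
proof -
  have "of_nat (k * m) * H = of_nat k * (\<lambda>\<rho>. int m * H \<rho>)"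
    by (simp add: fun_eq_iff of_nat_fun)
  moreover have "of_nat k * (\<lambda>\<rho>. int m * H \<rho>) \<in> Bp"
    using big_subgroup_of_nat_mult[OF big] hatvec_multiple \<sigma> by blast
  ultimately show ?thesis
    using big_subgroup_add[OF big assms] by simp
qed

lemma f_power_in_SB: "(f ^ n :: ('a, 'r::comm_ring_1) pol) \<in> SB \<Sigma> Bp"
proof -
  obtain \<nu> where "(f ^ n :: ('a, 'r) pol) = Poly_Mapping.single \<nu> 1"
    "Poly_Mapping.keys \<nu> \<subseteq> rays \<Sigma>" "mdeg \<nu> = of_nat (n * m) * H"
    using locf_power[OF rays_finite[OF fan]] by blast
  with shift_in_B[OF big_subgroup_zero[OF big]] show ?thesis
    by (simp add: single_in_SB)
qed

lemma f_power_in_Scomp: "(f ^ n :: ('a, 'r::comm_ring_1) pol) \<in> Scomp N \<Sigma> (of_nat (n * m) * H)"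
proof -
  obtain \<nu> where "(f ^ n :: ('a, 'r) pol) = Poly_Mapping.single \<nu> 1"
    "Poly_Mapping.keys \<nu> \<subseteq> rays \<Sigma>" "mdeg \<nu> = of_nat (n * m) * H"
    using locf_power[OF rays_finite[OF fan]] by blast
  then show ?thesis by (simp add: single_in_Scomp imc_zero)
qed

lemma ring_localization:
  "localized_module (*) f (SB \<Sigma> Bp) (SB \<Sigma> Bp :: ('a, 'r::comm_ring_1) pol set)"
  using f_power_in_SB[of 1]
  by unfold_locales (simp_all add: SB_mult[OF big] SB_add[OF big] SB_uminus[OF big] SB_one[OF big]
      SB_zero[OF big] distrib_left)

lemma balanced_monomial_pair:
  assumes zB: "z \<in> Bp" and z_R: "\<And>\<rho>. \<rho> \<notin> rays \<Sigma> - rays_of \<Sigma> \<sigma> \<Longrightarrow> z \<rho> = 0"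
  obtains K and a b :: "('a, 'r::comm_ring_1) pol"
  where "a \<in> SB \<Sigma> Bp" "b \<in> SB \<Sigma> Bp"
    and "a \<in> Scomp N \<Sigma> (z + of_nat (K * m) * H)" "b \<in> Scomp N \<Sigma> (- z + of_nat (K * m) * H)"
    and "a * b = f ^ (K + K)"
proof -
  define R where "R = rays \<Sigma> - rays_of \<Sigma> \<sigma>"
  have finR: "finite R" using rays_finite[OF fan] by (simp add: R_def)
  have H: "H \<rho> = (if \<rho> \<in> R then 1 else 0)" for \<rho> by (simp add: hatvec_def R_def)
  \<comment> \<open>Any \<open>K\<close> with \<open>|z| \<le> K m\<close> makes both exponents \<open>\<pm>z + K m \<alpha>\<^sub>\<sigma>\<close> nonnegative.\<close>
  define K where "K = (\<Sum>\<rho>\<in>R. nat \<bar>z \<rho>\<bar>)"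
  have z_bound: "\<bar>z \<rho>\<bar> \<le> int (K * m)" for \<rho>
  proof (cases "\<rho> \<in> R")
    case True
    then have "nat \<bar>z \<rho>\<bar> \<le> K" unfolding K_def using finR by (intro member_le_sum) simp_all
    moreover have "K \<le> K * m" using m_pos by simp
    ultimately show ?thesis by linarith
  qed (simp add: z_R R_def)
  have "(z + of_nat (K * m) * H) \<rho> \<ge> 0" "(- z + of_nat (K * m) * H) \<rho> \<ge> 0"
    and "\<rho> \<notin> R \<Longrightarrow> (z + of_nat (K * m) * H) \<rho> = 0" "\<rho> \<notin> R \<Longrightarrow> (- z + of_nat (K * m) * H) \<rho> = 0"
    for \<rho>
    using z_bound[of \<rho>] z_R[of \<rho>] by (auto simp: H R_def of_nat_fun abs_le_iff)
  then obtain \<mu>p \<mu>n where \<mu>p: "Poly_Mapping.keys \<mu>p \<subseteq> R" "mdeg \<mu>p = z + of_nat (K * m) * H"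
    and \<mu>n: "Poly_Mapping.keys \<mu>n \<subseteq> R" "mdeg \<mu>n = - z + of_nat (K * m) * H"
    using ex_monomial_with_mdeg[OF finR] by metis
  obtain \<nu> where \<nu>: "(f ^ (K + K) :: ('a, 'r) pol) = Poly_Mapping.single \<nu> 1"
    "mdeg \<nu> = of_nat ((K + K) * m) * H"
    using locf_power[OF rays_finite[OF fan]] by blast
  have "\<mu>p + \<mu>n = \<nu>"
    by (rule mdeg_inject) (simp add: mdeg_add \<mu>p(2) \<mu>n(2) \<nu>(2) algebra_simps)
  then have "Poly_Mapping.single \<mu>p 1 * Poly_Mapping.single \<mu>n 1 = (f ^ (K + K) :: ('a, 'r) pol)"
    by (simp add: mult_single \<nu>(1))
  moreover have keys: "Poly_Mapping.keys \<mu>p \<subseteq> rays \<Sigma>" "Poly_Mapping.keys \<mu>n \<subseteq> rays \<Sigma>"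
    using \<mu>p(1) \<mu>n(1) by (auto simp: R_def)
  moreover have "z + of_nat (K * m) * H \<in> Bp" "- z + of_nat (K * m) * H \<in> Bp"
    using shift_in_B zB big_subgroup_uminus[OF big] by blast+
  then have "Poly_Mapping.single \<mu>p 1 \<in> SB \<Sigma> Bp" "Poly_Mapping.single \<mu>n 1 \<in> SB \<Sigma> Bp"
    using keys by (simp_all add: \<mu>p(2) \<mu>n(2) single_in_SB)
  moreover have "Poly_Mapping.single \<mu>p 1 \<in> Scomp N \<Sigma> (z + of_nat (K * m) * H)"
    by (rule single_in_Scomp[OF keys(1)]) (simp add: \<mu>p(2) imc_zero)
  moreover have "Poly_Mapping.single \<mu>n 1 \<in> Scomp N \<Sigma> (- z + of_nat (K * m) * H)"
    by (rule single_in_Scomp[OF keys(2)]) (simp add: \<mu>n(2) imc_zero)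
  ultimately show ?thesis using that by blast
qed

lemma unit_in_degree:
  assumes x: "x \<in> Bp"
  obtains K and a b :: "('a, 'r::comm_ring_1) pol"
  where "a \<in> SB \<Sigma> Bp" "b \<in> SB \<Sigma> Bp"
    and "a \<in> Scomp N \<Sigma> (x + of_nat (K * m) * H)" "b \<in> Scomp N \<Sigma> (- x + of_nat (K * m) * H)"
    and "a * b = f ^ (K + K)"
proof -
  obtain z where xz: "x - z \<in> imc N \<Sigma>" and z_R: "\<And>\<rho>. \<rho> \<notin> rays \<Sigma> - rays_of \<Sigma> \<sigma> \<Longrightarrow> z \<rho> = 0"
    using Pic_pre_trivial_on_chart[OF lattice fan _ \<sigma>] small x unfolding small_subgroup_def by blast
  have "x + - (x - z) \<in> Bp"
    using imc_subset_big_subgroup[OF big] xz big_subgroup_add[OF big x] big_subgroup_uminus[OF big]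
    by blast
  then have "z \<in> Bp" by simp
  then obtain K and a b :: "('a, 'r) pol" where ab: "a \<in> SB \<Sigma> Bp" "b \<in> SB \<Sigma> Bp"
    "a \<in> Scomp N \<Sigma> (z + of_nat (K * m) * H)" "b \<in> Scomp N \<Sigma> (- z + of_nat (K * m) * H)"
    "a * b = f ^ (K + K)"
    using balanced_monomial_pair z_R by metis
  have same_class: "Scomp N \<Sigma> (z + of_nat (K * m) * H) = Scomp N \<Sigma> (x + of_nat (K * m) * H)"
    "Scomp N \<Sigma> (- z + of_nat (K * m) * H) = Scomp N \<Sigma> (- x + of_nat (K * m) * H)"
    using xz imc_uminus[OF xz] by (simp_all add: Scomp_cong)
  show ?thesis using ab(1,2) ab(3,4)[unfolded same_class] ab(5) by (rule that)
qed

section \<open>Strong grading of \<open>S\<^sub>B\<^sub>,\<^sub>\<sigma>\<close>\<close>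

lemma SBloc_compI:
  "p \<in> SB \<Sigma> Bp \<Longrightarrow> p \<in> Scomp N \<Sigma> (x + of_nat (k * m) * H) \<Longrightarrow>
    loc_cls (*) f (SB \<Sigma> Bp) (p, k) \<in> SBloc_comp N \<Sigma> Bp \<sigma> m x"
  unfolding SBloc_comp_def by blast

lemma SBloc_compE:
  assumes "c \<in> SBloc_comp N \<Sigma> Bp \<sigma> m x"
  obtains p k where "c = loc_cls (*) f (SB \<Sigma> Bp) (p, k)" "p \<in> SB \<Sigma> Bp"
    "p \<in> Scomp N \<Sigma> (x + of_nat (k * m) * H)"
  using assms unfolding SBloc_comp_def by blast

lemma SBloc_comp_zero: "loc_zero (*) f (SB \<Sigma> Bp) \<in> SBloc_comp N \<Sigma> Bp \<sigma> m x"
  unfolding loc_zero_def using SBloc_compI[OF SB_zero[OF big] Scomp_zero, where k = 0 and x = x] by simp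

lemma SBloc_comp_add:
  assumes "c \<in> SBloc_comp N \<Sigma> Bp \<sigma> m x" "d \<in> SBloc_comp N \<Sigma> Bp \<sigma> m x"
  shows "loc_add (*) f (SB \<Sigma> Bp) c d \<in> SBloc_comp N \<Sigma> Bp \<sigma> m x"
proof -
  interpret R: localized_module "(*)" f "SB \<Sigma> Bp" "SB \<Sigma> Bp" by (rule ring_localization)
  obtain p k where p: "c = R.cls (p, k)" "p \<in> SB \<Sigma> Bp" "p \<in> Scomp N \<Sigma> (x + of_nat (k * m) * H)"
    using assms(1) by (rule SBloc_compE)
  obtain q l where q: "d = R.cls (q, l)" "q \<in> SB \<Sigma> Bp" "q \<in> Scomp N \<Sigma> (x + of_nat (l * m) * H)"
    using assms(2) by (rule SBloc_compE)
  have "f ^ l * p \<in> Scomp N \<Sigma> (x + of_nat ((l + k) * m) * H)"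
    using Scomp_mult[OF f_power_in_Scomp p(3)] by (simp only: f_power_shift)
  moreover have "f ^ k * q \<in> Scomp N \<Sigma> (x + of_nat ((k + l) * m) * H)"
    using Scomp_mult[OF f_power_in_Scomp q(3)] by (simp only: f_power_shift)
  ultimately have "f ^ l * p + f ^ k * q \<in> Scomp N \<Sigma> (x + of_nat ((k + l) * m) * H)"
    by (simp only: Scomp_add add.commute)
  moreover have "f ^ l * p + f ^ k * q \<in> SB \<Sigma> Bp"
    by (intro SB_add[OF big] SB_mult[OF big] f_power_in_SB p(2) q(2))
  ultimately show ?thesis by (simp add: p(1) q(1) p(2) q(2) R.loc_add_cls SBloc_compI)
qed

lemma SBloc_comp_neg:
  assumes "c \<in> SBloc_comp N \<Sigma> Bp \<sigma> m x"
  shows "loc_neg (*) f (SB \<Sigma> Bp) c \<in> SBloc_comp N \<Sigma> Bp \<sigma> m x"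
proof -
  interpret R: localized_module "(*)" f "SB \<Sigma> Bp" "SB \<Sigma> Bp" by (rule ring_localization)
  obtain p k where p: "c = R.cls (p, k)" "p \<in> SB \<Sigma> Bp" "p \<in> Scomp N \<Sigma> (x + of_nat (k * m) * H)"
    using assms by (rule SBloc_compE)
  then show ?thesis
    by (simp add: R.loc_neg_cls SBloc_compI SB_uminus[OF big] Scomp_uminus)
qed

lemma SBloc_comp_mult:
  assumes "s \<in> SBloc_comp N \<Sigma> Bp \<sigma> m x" "t \<in> SBloc_comp N \<Sigma> Bp \<sigma> m y"
  shows "loc_smul (*) f (SB \<Sigma> Bp) s t \<in> SBloc_comp N \<Sigma> Bp \<sigma> m (x + y)"
proof -
  interpret R: localized_module "(*)" f "SB \<Sigma> Bp" "SB \<Sigma> Bp" by (rule ring_localization)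
  obtain p k where p: "s = R.cls (p, k)" "p \<in> SB \<Sigma> Bp" "p \<in> Scomp N \<Sigma> (x + of_nat (k * m) * H)"
    using assms(1) by (rule SBloc_compE)
  obtain q l where q: "t = R.cls (q, l)" "q \<in> SB \<Sigma> Bp" "q \<in> Scomp N \<Sigma> (y + of_nat (l * m) * H)"
    using assms(2) by (rule SBloc_compE)
  have "p * q \<in> Scomp N \<Sigma> ((x + y) + of_nat ((k + l) * m) * H)"
    using Scomp_mult[OF p(3) q(3)] by (simp only: shift_add)
  then show ?thesis
    by (simp add: p q R.loc_smul_cls SBloc_compI SB_mult[OF big])
qed

lemma SBloc_comp_factor:
  assumes y: "y \<in> Bp"
    and c: "c \<in> (SBloc_comp N \<Sigma> Bp \<sigma> m (x + y) :: (('a, 'r::comm_ring_1) pol \<times> nat) set set)"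
  obtains s t where "s \<in> SBloc_comp N \<Sigma> Bp \<sigma> m x" "t \<in> SBloc_comp N \<Sigma> Bp \<sigma> m y"
    and "c = loc_smul (*) f (SB \<Sigma> Bp) s t"
proof -
  interpret R: localized_module "(*)" f "SB \<Sigma> Bp" "SB \<Sigma> Bp" by (rule ring_localization)
  obtain p k where p: "c = R.cls (p, k)" "p \<in> SB \<Sigma> Bp"
    "p \<in> Scomp N \<Sigma> ((x + y) + of_nat (k * m) * H)"
    using c by (rule SBloc_compE)
  obtain K and a b :: "('a, 'r) pol" where ab: "a \<in> SB \<Sigma> Bp" "b \<in> SB \<Sigma> Bp"
    "a \<in> Scomp N \<Sigma> (y + of_nat (K * m) * H)" "b \<in> Scomp N \<Sigma> (- y + of_nat (K * m) * H)"
    "a * b = f ^ (K + K)"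
    using unit_in_degree[OF y] by blast
  have "((x + y) + of_nat (k * m) * H) + (- y + of_nat (K * m) * H) = x + of_nat ((k + K) * m) * H"
    by (simp add: algebra_simps)
  then have "p * b \<in> Scomp N \<Sigma> (x + of_nat ((k + K) * m) * H)"
    using Scomp_mult[OF p(3) ab(4)] by simp
  then have "R.cls (p * b, k + K) \<in> SBloc_comp N \<Sigma> Bp \<sigma> m x"
    by (intro SBloc_compI SB_mult[OF big] p(2) ab(2))
  moreover have "R.cls (a, K) \<in> SBloc_comp N \<Sigma> Bp \<sigma> m y"
    by (rule SBloc_compI[OF ab(1,3)])
  moreover have "loc_smul (*) f (SB \<Sigma> Bp) (R.cls (p * b, k + K)) (R.cls (a, K)) = c"
  proof -
    have "R.cls (p * b * a, k + K + K) = R.cls (a * (b * p), K + (K + k))"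
      by (simp add: ac_simps)
    also have "\<dots> = c"
      using R.loc_cls_cancel[OF ab(1,2) p(2) ab(5)] p(1) by simp
    finally show ?thesis
      using p(2) ab by (simp add: R.loc_smul_cls SB_mult[OF big])
  qed
  ultimately show ?thesis using that by blast
qed

theorem SBloc_comp_strongly_graded:
  assumes "y \<in> Bp"
  shows "SBloc_comp N \<Sigma> Bp \<sigma> m (x + y) =
    loc_subgroup_gen (*) f (SB \<Sigma> Bp)
      {loc_smul (*) f (SB \<Sigma> Bp) s t | s t.
         s \<in> SBloc_comp N \<Sigma> Bp \<sigma> m x \<and> t \<in> SBloc_comp N \<Sigma> Bp \<sigma> m y}"
proof (intro set_eqI iffI)
  fix c assume "c \<in> SBloc_comp N \<Sigma> Bp \<sigma> m (x + y)"
  then obtain s t where "s \<in> SBloc_comp N \<Sigma> Bp \<sigma> m x" "t \<in> SBloc_comp N \<Sigma> Bp \<sigma> m y"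
    "c = loc_smul (*) f (SB \<Sigma> Bp) s t"
    using SBloc_comp_factor[OF assms] by blast
  then show "c \<in> loc_subgroup_gen (*) f (SB \<Sigma> Bp)
      {loc_smul (*) f (SB \<Sigma> Bp) s t | s t.
         s \<in> SBloc_comp N \<Sigma> Bp \<sigma> m x \<and> t \<in> SBloc_comp N \<Sigma> Bp \<sigma> m y}"
    by (blast intro: loc_subgroup_gen.gen_base)
next
  fix c assume "c \<in> loc_subgroup_gen (*) f (SB \<Sigma> Bp)
      {loc_smul (*) f (SB \<Sigma> Bp) s t | s t.
         s \<in> SBloc_comp N \<Sigma> Bp \<sigma> m x \<and> t \<in> SBloc_comp N \<Sigma> Bp \<sigma> m y}"
  then show "c \<in> SBloc_comp N \<Sigma> Bp \<sigma> m (x + y)"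
  proof induction
    case gen_zero
    show ?case by (rule SBloc_comp_zero)
  next
    case (gen_base g)
    then show ?case using SBloc_comp_mult by blast
  next
    case (gen_add c d)
    show ?case using gen_add.IH by (rule SBloc_comp_add)
  next
    case (gen_neg c)
    show ?case using gen_neg.IH by (rule SBloc_comp_neg)
  qed
qed

end

section \<open>Graded modules\<close>

locale graded_chart_module = small_chart N \<Sigma> Bp \<sigma> m
  for N :: "'a::euclidean_space set" and \<Sigma> Bp \<sigma> m +
  fixes act :: "('a, 'r::comm_ring_1) pol \<Rightarrow> 'm::ab_group_add \<Rightarrow> 'm" and Fg :: "('a set \<Rightarrow> int) \<Rightarrow> 'm set"
  assumes graded: "graded_module N \<Sigma> Bp act Fg"
begin

lemma act_add: "p \<in> SB \<Sigma> Bp \<Longrightarrow> act p (v + w) = act p v + act p w"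
  using graded by (simp add: graded_module_def)

lemma act_mult: "p \<in> SB \<Sigma> Bp \<Longrightarrow> q \<in> SB \<Sigma> Bp \<Longrightarrow> act (p * q) v = act p (act q v)"
  using graded by (simp add: graded_module_def)

lemma act_degree:
  assumes "x \<in> Bp" "y \<in> Bp" "p \<in> Scomp N \<Sigma> x" "v \<in> Fg y"
  shows "act p v \<in> Fg (x + y)"
  using graded[unfolded graded_module_def, THEN conjunct2, THEN conjunct2, THEN conjunct2,
      THEN conjunct2, THEN conjunct2, THEN conjunct2, THEN conjunct2, THEN conjunct2, rule_format, OF assms] .

sublocale M: localized_module act "locf \<Sigma> \<sigma> m" UNIV "SB \<Sigma> Bp"
  using f_power_in_SB[of 1]
  by unfold_locales (simp_all add: SB_mult[OF big] SB_one[OF big] act_mult act_add)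

lemma Floc_compI:
  "v \<in> Fg (x + of_nat (k * m) * H) \<Longrightarrow> M.cls (v, k) \<in> Floc_comp N \<Sigma> \<sigma> m act Fg x"
  unfolding Floc_comp_def by blast

lemma Floc_compE:
  assumes "u \<in> Floc_comp N \<Sigma> \<sigma> m act Fg x"
  obtains v k where "u = M.cls (v, k)" "v \<in> Fg (x + of_nat (k * m) * H)"
  using assms unfolding Floc_comp_def by blast

lemma Floc_comp_smul:
  assumes "x \<in> Bp" "y \<in> Bp"
    and "s \<in> SBloc_comp N \<Sigma> Bp \<sigma> m x" "u \<in> Floc_comp N \<Sigma> \<sigma> m act Fg y"
  shows "loc_smul act f UNIV s u \<in> Floc_comp N \<Sigma> \<sigma> m act Fg (x + y)"
proof -
  obtain p k where p: "s = M.clsP (p, k)" "p \<in> SB \<Sigma> Bp" "p \<in> Scomp N \<Sigma> (x + of_nat (k * m) * H)"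
    using assms(3) by (rule SBloc_compE)
  obtain v l where v: "u = M.cls (v, l)" "v \<in> Fg (y + of_nat (l * m) * H)"
    using assms(4) by (rule Floc_compE)
  have "act p v \<in> Fg ((x + y) + of_nat ((k + l) * m) * H)"
    using act_degree[OF shift_in_B[OF assms(1)] shift_in_B[OF assms(2)] p(3) v(2)]
    by (simp only: shift_add)
  then show ?thesis by (simp add: p(1,2) v(1) M.loc_smul_cls Floc_compI)
qed

theorem Floc_comp_iso:
  assumes x: "x \<in> Bp"
  shows "\<exists>\<phi>. bij_betw \<phi> (Floc_comp N \<Sigma> \<sigma> m act Fg x) (Floc_comp N \<Sigma> \<sigma> m act Fg 0) \<and>
    (\<forall>u\<in>Floc_comp N \<Sigma> \<sigma> m act Fg x. \<forall>v\<in>Floc_comp N \<Sigma> \<sigma> m act Fg x.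
      \<phi> (loc_add act f UNIV u v) = loc_add act f UNIV (\<phi> u) (\<phi> v)) \<and>
    (\<forall>s\<in>SBloc_comp N \<Sigma> Bp \<sigma> m 0. \<forall>u\<in>Floc_comp N \<Sigma> \<sigma> m act Fg x.
      \<phi> (loc_smul act f UNIV s u) = loc_smul act f UNIV s (\<phi> u))"
proof -
  obtain K and a b :: "('a, 'r) pol" where ab: "a \<in> SB \<Sigma> Bp" "b \<in> SB \<Sigma> Bp"
    "a \<in> Scomp N \<Sigma> (x + of_nat (K * m) * H)" "b \<in> Scomp N \<Sigma> (- x + of_nat (K * m) * H)"
    "a * b = f ^ (K + K)"
    using unit_in_degree[OF x] by blast
  \<comment> \<open>Multiplication by \<open>b/f\<^sup>K\<close> and by its inverse \<open>a/f\<^sup>K\<close>.\<close>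
  define \<phi> where "\<phi> = loc_smul act f UNIV (M.clsP (b, K))"
  define \<psi> where "\<psi> = loc_smul act f UNIV (M.clsP (a, K))"
  have a_comp: "M.clsP (a, K) \<in> SBloc_comp N \<Sigma> Bp \<sigma> m x"
    and b_comp: "M.clsP (b, K) \<in> SBloc_comp N \<Sigma> Bp \<sigma> m (- x)"
    using ab by (simp_all add: SBloc_compI)
  have "\<psi> (\<phi> u) = u" if u: "u \<in> Floc_comp N \<Sigma> \<sigma> m act Fg x" for u
  proof -
    obtain v l where "u = M.cls (v, l)" using u by (rule Floc_compE)
    then show ?thesis
      using M.loc_cls_cancel[OF ab(1,2) UNIV_I ab(5)] ab(1,2) by (simp add: \<phi>_def \<psi>_def M.loc_smul_cls)
  qed
  moreover have "\<phi> (\<psi> u) = u" if u: "u \<in> Floc_comp N \<Sigma> \<sigma> m act Fg 0" for u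
  proof -
    obtain v l where "u = M.cls (v, l)" using u by (rule Floc_compE)
    moreover have "b * a = f ^ (K + K)" using ab(5) by (simp add: mult.commute)
    ultimately show ?thesis
      using M.loc_cls_cancel[OF ab(2,1) UNIV_I] ab(1,2) by (simp add: \<phi>_def \<psi>_def M.loc_smul_cls)
  qed
  moreover have "\<phi> ` Floc_comp N \<Sigma> \<sigma> m act Fg x \<subseteq> Floc_comp N \<Sigma> \<sigma> m act Fg 0"
    using Floc_comp_smul[OF big_subgroup_uminus[OF big x] x b_comp] by (auto simp: \<phi>_def)
  moreover have "\<psi> ` Floc_comp N \<Sigma> \<sigma> m act Fg 0 \<subseteq> Floc_comp N \<Sigma> \<sigma> m act Fg x"
    using Floc_comp_smul[OF x big_subgroup_zero[OF big] a_comp] by (auto simp: \<psi>_def)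
  ultimately have bij: "bij_betw \<phi> (Floc_comp N \<Sigma> \<sigma> m act Fg x) (Floc_comp N \<Sigma> \<sigma> m act Fg 0)"
    by (intro bij_betw_byWitness[where f' = \<psi>]) auto
  have hom_add: "\<phi> (loc_add act f UNIV u v) = loc_add act f UNIV (\<phi> u) (\<phi> v)"
    if u: "u \<in> Floc_comp N \<Sigma> \<sigma> m act Fg x" and v: "v \<in> Floc_comp N \<Sigma> \<sigma> m act Fg x" for u v
  proof -
    obtain w k where u_eq: "u = M.cls (w, k)" using u by (rule Floc_compE)
    obtain w' l where v_eq: "v = M.cls (w', l)" using v by (rule Floc_compE)
    show ?thesis unfolding \<phi>_def u_eq v_eq by (rule M.loc_smul_loc_add[OF ab(2) UNIV_I UNIV_I])
  qed
  have hom_smul: "\<phi> (loc_smul act f UNIV s u) = loc_smul act f UNIV s (\<phi> u)"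
    if s: "s \<in> SBloc_comp N \<Sigma> Bp \<sigma> m 0" and u: "u \<in> Floc_comp N \<Sigma> \<sigma> m act Fg x" for s u
  proof -
    obtain p k where s_eq: "s = M.clsP (p, k)" and p: "p \<in> SB \<Sigma> Bp"
      and "p \<in> Scomp N \<Sigma> (0 + of_nat (k * m) * H)"
      using s by (rule SBloc_compE)
    obtain v l where u_eq: "u = M.cls (v, l)" using u by (rule Floc_compE)
    show ?thesis unfolding \<phi>_def s_eq u_eq by (rule M.loc_smul_commute[OF ab(2) p UNIV_I])
  qed
  show ?thesis
    using bij hom_add hom_smul by (intro exI[of _ \<phi>] conjI ballI) (simp_all only:)
qed

end

theorem theorem3p330:
  fixes N :: "'a::euclidean_space set" and \<Sigma> :: "'a set set"
    and Bp :: "('a set \<Rightarrow> int) set" and \<sigma> :: "'a set" and m :: nat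
  assumes "is_lattice N"
    and "is_fan N \<Sigma>"
    and "big_subgroup N \<Sigma> Bp"
    and "small_subgroup N \<Sigma> Bp"
    and "\<sigma> \<in> \<Sigma>"
    and "m \<ge> 1"
    and "\<forall>\<tau>\<in>\<Sigma>. (\<lambda>\<rho>. int m * hatvec \<Sigma> \<tau> \<rho>) \<in> Bp"
  shows
    "(\<forall>x\<in>Bp. \<forall>y\<in>Bp.
        (SBloc_comp N \<Sigma> Bp \<sigma> m (\<lambda>\<rho>. x \<rho> + y \<rho>) :: (('a, 'r::comm_ring_1) pol \<times> nat) set set) =
        loc_subgroup_gen (*) (locf \<Sigma> \<sigma> m) (SB \<Sigma> Bp)
          {loc_smul (*) (locf \<Sigma> \<sigma> m) (SB \<Sigma> Bp) s t | s t.
             s \<in> SBloc_comp N \<Sigma> Bp \<sigma> m x \<and> t \<in> SBloc_comp N \<Sigma> Bp \<sigma> m y})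
     \<and>
     (\<forall>(act :: ('a, 'r) pol \<Rightarrow> 'm::ab_group_add \<Rightarrow> 'm) Fg.
        graded_module N \<Sigma> Bp act Fg \<longrightarrow>
        (\<forall>x\<in>Bp. \<exists>\<phi>.
           bij_betw \<phi> (Floc_comp N \<Sigma> \<sigma> m act Fg x) (Floc_comp N \<Sigma> \<sigma> m act Fg (\<lambda>_. 0)) \<and>
           (\<forall>u\<in>Floc_comp N \<Sigma> \<sigma> m act Fg x. \<forall>v\<in>Floc_comp N \<Sigma> \<sigma> m act Fg x.
              \<phi> (loc_add act (locf \<Sigma> \<sigma> m) UNIV u v) = loc_add act (locf \<Sigma> \<sigma> m) UNIV (\<phi> u) (\<phi> v)) \<and>
           (\<forall>s\<in>SBloc_comp N \<Sigma> Bp \<sigma> m (\<lambda>_. 0). \<forall>u\<in>Floc_comp N \<Sigma> \<sigma> m act Fg x.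
              \<phi> (loc_smul act (locf \<Sigma> \<sigma> m) UNIV s u) = loc_smul act (locf \<Sigma> \<sigma> m) UNIV s (\<phi> u))))"
proof -
  interpret small_chart N \<Sigma> Bp \<sigma> m
    using assms by unfold_locales
  have module: "graded_chart_module N \<Sigma> Bp \<sigma> m act Fg" if "graded_module N \<Sigma> Bp act Fg"
    for act :: "('a, 'r) pol \<Rightarrow> 'm \<Rightarrow> 'm" and Fg
    using that by (intro graded_chart_module.intro graded_chart_module_axioms.intro small_chart_axioms)
  have zero: "(\<lambda>_. 0) = (0 :: 'a set \<Rightarrow> int)" by (simp add: fun_eq_iff)
  show ?thesis
    apply (intro conjI ballI allI impI)
    subgoal for x y
      using SBloc_comp_strongly_graded[of y x] by (simp only: plus_fun_def True_implies_equals)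
    subgoal for act Fg x
      using graded_chart_module.Floc_comp_iso[OF module] by (simp only: zero True_implies_equals)
    done
qed

end
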